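(* Let $G_1$ and $G_2$ be bi-fuzzy automata with event sets $\hat\Sigma_1,\hat\Sigma_2$ over crisp state sets of sizes $m$ and $n$, and let $G_1\|G_2$ be their parallel composition. Then for every $s\in(\hat\Sigma_1\cup\hat\Sigma_2)^*$, $$L_{G_1\|G_2}(s)=L_{G_1}(s)\sqcap L_{G_2}(s),$$ where $L_{G_i}(s)$ is computed by letting each event not in $\hat\Sigma_i$ act in $G_i$ as the identity matrix $I_i$.
   Context: $NCFD$ is the set of normal convex type-1 fuzzy sets $\mu:[0,1]\to[0,1]$ ($\max_u\mu(u)=1$, and $\mu(u_j)\ge\min\{\mu(u_i),\mu(u_k)\}$ for $u_i\le u_j\le u_k$); $a/u_0$ denotes the fuzzy set with value $a$ at $u_0$ and $0$ elsewhere. Operations: $(\mu_1\sqcup\mu_2)(v)=\sup\{\min(\mu_1(u),\mu_2(w)):\max(u,w)=v\}$, $(\mu_1\sqcap\mu_2)(v)=\sup\{\min(\mu_1(u),\mu_2(w)):\min(u,w)=v\}$. Matrix composition: $(R\odot S)(x,z)=\bigsqcup_y[R(x,y)\sqcap S(y,z)]$. Bi-fuzzy tensor: for $\hat A=[\tilde a_{ij}]$ ($k\times m$), $\hat B$ ($p\times s$), $\hat A\otimes\hat B$ is the $kp\times ms$ block matrix with $(i,j)$ block $[\tilde a_{ij}\sqcap\tilde b_{pq}]_{p,q}$. A bi-fuzzy automaton $G=(\hat X,\hat\Sigma,\delta,\hat x_0,\hat x_m)$ over a crisp state set of size $n$ has bi-fuzzy states = row vectors in $NCFD^n$, events $\sigma\in\hat\Sigma$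 given by $n\times n$ matrices over $NCFD$, $\delta(\hat x,\sigma)=\hat x\odot\sigma$, initial and final bi-fuzzy states $\hat x_0,\hat x_m\in NCFD^n$. Its generated language $L_G:\hat\Sigma^*\to NCFD$ is $L_G(\epsilon)=1/1$ and $L_G(\sigma_1\cdots\sigma_k)=\hat x_0\odot\sigma_1\odot\cdots\odot\sigma_k\odot A_n^T$, with $A_n=[1/1,\dots,1/1]$ of length $n$. The unit matrix $I_n$ has $1/1$ on the diagonal and $1/0$ elsewhere. For $G_i=(\hat X_i,\hat\Sigma_i,\delta_i,\hat x_{0i},\hat x_{mi})$, $i=1,2$, with state sets of sizes $m$ and $n$, the parallel composition $G_1\|G_2$ is the bi-fuzzy automaton over a crisp state set of size $mn$ with initial state $\hat x_{01}\otimes\hat x_{02}$, final state $\hat x_{m1}\otimes\hat x_{m2}$, event set $\hat\Sigma_1\cup\hat\Sigma_2$, transitions $(\hat x_1\otimes\hat x_2,\sigma)\mapsto(\hat x_1\otimes\hat x_2)\odot\sigma$, where the matrix of $\sigma$ is $\sigma_1\otimes\sigma_2$ if $\sigma\in\hat\Sigma_1\cap\hat\Sigma_2$ ($\sigma_i$ its matrix in $G_i$), $\sigma_1\otimes I_n$ if $\sigma\in\hat\Sigma_1\setminus\hat\Sigma_2$, and $I_m\otimes\sigma_2$ if $\sigma\in\hat\Sigma_2\setminus\hat\Sigma_1$. *)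

theory Defs
  imports Main "HOL.Real"
begin

text \<open>Type-1 fuzzy sets on [0,1] are represented as functions real \<Rightarrow> real;
  only their values on [0,1] matter.\<close>
type_synonym fz = "real \<Rightarrow> real"

text \<open>Matrices over fuzzy sets, indexed from 0; dimensions are tracked explicitly.
  Row vectors are 1 x n matrices (row index 0).\<close>
type_synonym fmat = "nat \<Rightarrow> nat \<Rightarrow> fz"

definition ncfd :: "fz \<Rightarrow> bool" where
  "ncfd \<mu> \<longleftrightarrow>
     (\<forall>u\<in>{0..1}. 0 \<le> \<mu> u \<and> \<mu> u \<le> 1) \<and>
     (\<exists>u\<in>{0..1}. \<mu> u = 1) \<and>
     (\<forall>ui\<in>{0..1}. \<forall>uj\<in>{0..1}. \<forall>uk\<in>{0..1}.
        ui \<le> uj \<and> uj \<le> uk \<longrightarrow> min (\<mu> ui) (\<mu> uk) \<le> \<mu> uj)"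

text \<open>a/u0: value a at u0 and 0 elsewhere\<close>
definition singl :: "real \<Rightarrow> real \<Rightarrow> fz" where
  "singl a u0 = (\<lambda>u. if u = u0 then a else 0)"

definition fjoin :: "fz \<Rightarrow> fz \<Rightarrow> fz" where
  "fjoin \<mu>1 \<mu>2 = (\<lambda>v. if v \<in> {0..1} then
      Sup {min (\<mu>1 u) (\<mu>2 w) | u w. u \<in> {0..1} \<and> w \<in> {0..1} \<and> max u w = v}
     else 0)"

definition fmeet :: "fz \<Rightarrow> fz \<Rightarrow> fz" where
  "fmeet \<mu>1 \<mu>2 = (\<lambda>v. if v \<in> {0..1} then
      Sup {min (\<mu>1 u) (\<mu>2 w) | u w. u \<in> {0..1} \<and> w \<in> {0..1} \<and> min u w = v}
     else 0)"

text \<open>Finite join over indices 0..<n (1/0 is the neutral element of the join).\<close>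
definition bigjoin :: "nat \<Rightarrow> (nat \<Rightarrow> fz) \<Rightarrow> fz" where
  "bigjoin n f = foldr (\<lambda>y acc. fjoin (f y) acc) [0..<n] (singl 1 0)"

definition mcomp :: "nat \<Rightarrow> fmat \<Rightarrow> fmat \<Rightarrow> fmat" where
  "mcomp n R S = (\<lambda>x z. bigjoin n (\<lambda>y. fmeet (R x y) (S y z)))"

definition tensor :: "nat \<Rightarrow> nat \<Rightarrow> fmat \<Rightarrow> fmat \<Rightarrow> fmat" where
  "tensor p s A B = (\<lambda>r c. fmeet (A (r div p) (c div s)) (B (r mod p) (c mod s)))"

definition unitm :: fmat where
  "unitm = (\<lambda>i j. if i = j then singl 1 1 else singl 1 0)"

definition onescol :: fmat where
  "onescol = (\<lambda>i j. singl 1 1)"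

record 'e bfa =
  nst :: nat
  events :: "'e set"
  evm :: "'e \<Rightarrow> fmat"
  init :: fmat
  final :: fmat

definition is_bfa :: "'e bfa \<Rightarrow> bool" where
  "is_bfa G \<longleftrightarrow> 0 < nst G \<and>
     (\<forall>i<nst G. ncfd (init G 0 i) \<and> ncfd (final G 0 i)) \<and>
     (\<forall>\<sigma>\<in>events G. \<forall>i<nst G. \<forall>j<nst G. ncfd (evm G \<sigma> i j))"

definition lang_with :: "'e bfa \<Rightarrow> ('e \<Rightarrow> fmat) \<Rightarrow> 'e list \<Rightarrow> fz" where
  "lang_with G M s = (if s = [] then singl 1 1 else
     mcomp (nst G) (foldl (\<lambda>x \<sigma>. mcomp (nst G) x (M \<sigma>)) (init G) s) onescol 0 0)"

definition lang :: "'e bfa \<Rightarrow> 'e list \<Rightarrow> fz" where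
  "lang G s = lang_with G (evm G) s"

definition lang_ext :: "'e bfa \<Rightarrow> 'e list \<Rightarrow> fz" where
  "lang_ext G s = lang_with G (\<lambda>\<sigma>. if \<sigma> \<in> events G then evm G \<sigma> else unitm) s"

definition parcomp :: "'e bfa \<Rightarrow> 'e bfa \<Rightarrow> 'e bfa" where
  "parcomp G1 G2 = (let n = nst G2 in
     \<lparr> nst = nst G1 * n,
       events = events G1 \<union> events G2,
       evm = (\<lambda>\<sigma>. if \<sigma> \<in> events G1 \<and> \<sigma> \<in> events G2 then tensor n n (evm G1 \<sigma>) (evm G2 \<sigma>)
                  else if \<sigma> \<in> events G1 then tensor n n (evm G1 \<sigma>) unitm
                  else tensor n n unitm (evm G2 \<sigma>)),
       init = tensor 1 n (init G1) (init G2),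
       final = tensor 1 n (final G1) (final G2) \<rparr>)"

end

theory Submission
  imports Defs
begin

text \<open>A normal convex fuzzy set f on [0,1] is the minimum of its increasing hull
  (the sup of f over [0,v]) and its decreasing hull (the sup over [v,1]), and it is
  determined by these two envelopes. Under \<open>\<sqcap>\<close> the envelopes combine as (max, min), under
  \<open>\<sqcup>\<close> as (min, max), so NCFD with these operations satisfies the laws of a distributive
  lattice with bottom 1/0. Hence a join of meets of two independent index sets factors as
  a meet of two joins, which is exactly one step of the composition with a tensor matrix;
  induction along the word gives the claim.\<close>

definition fz_bounded :: "fz \<Rightarrow> bool" where
  "fz_bounded f \<longleftrightarrow> (\<forall>u\<in>{0..1}. 0 \<le> f u \<and> f u \<le> 1)"

text \<open>Fuzzy sets are total functions on the reals while NCFD only constrains [0,1];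
  since \<open>\<sqcap>\<close> and \<open>\<sqcup>\<close> are 0 outside [0,1], equations between them also need this.\<close>

definition vanishes_outside_unit :: "fz \<Rightarrow> bool" where
  "vanishes_outside_unit f \<longleftrightarrow> (\<forall>v. v \<notin> {0..1} \<longrightarrow> f v = 0)"

definition left_env :: "fz \<Rightarrow> real \<Rightarrow> real" where
  "left_env f v = (SUP u\<in>{0..v}. f u)"

definition right_env :: "fz \<Rightarrow> real \<Rightarrow> real" where
  "right_env f v = (SUP u\<in>{v..1}. f u)"

lemma fz_boundedD: "fz_bounded f \<Longrightarrow> 0 \<le> u \<Longrightarrow> u \<le> 1 \<Longrightarrow> 0 \<le> f u \<and> f u \<le> 1"
  unfolding fz_bounded_def by auto

lemma fz_bounded_bdd_above: "fz_bounded f \<Longrightarrow> S \<subseteq> {0..1} \<Longrightarrow> bdd_above (f ` S)"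
  unfolding fz_bounded_def by (intro bdd_aboveI[where M=1]) auto

lemma left_env_upper: "fz_bounded f \<Longrightarrow> 0 \<le> u \<Longrightarrow> u \<le> v \<Longrightarrow> v \<le> 1 \<Longrightarrow> f u \<le> left_env f v"
  unfolding left_env_def by (rule cSUP_upper) (auto intro: fz_bounded_bdd_above)

lemma left_env_least: "0 \<le> v \<Longrightarrow> (\<And>u. 0 \<le> u \<Longrightarrow> u \<le> v \<Longrightarrow> f u \<le> c) \<Longrightarrow> left_env f v \<le> c"
  unfolding left_env_def by (rule cSUP_least) auto

lemma right_env_upper: "fz_bounded f \<Longrightarrow> 0 \<le> v \<Longrightarrow> v \<le> u \<Longrightarrow> u \<le> 1 \<Longrightarrow> f u \<le> right_env f v"
  unfolding right_env_def by (rule cSUP_upper) (auto intro: fz_bounded_bdd_above)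

lemma right_env_least: "v \<le> 1 \<Longrightarrow> (\<And>u. v \<le> u \<Longrightarrow> u \<le> 1 \<Longrightarrow> f u \<le> c) \<Longrightarrow> right_env f v \<le> c"
  unfolding right_env_def by (rule cSUP_least) auto

lemma min_cSUP_cSUP_le:
  fixes f :: "'a \<Rightarrow> real" and g :: "'b \<Rightarrow> real"
  assumes "A \<noteq> {}" "B \<noteq> {}" "bdd_above (f ` A)" "bdd_above (g ` B)"
    and "\<And>a b. a \<in> A \<Longrightarrow> b \<in> B \<Longrightarrow> min (f a) (g b) \<le> c"
  shows "min (SUP a\<in>A. f a) (SUP b\<in>B. g b) \<le> c"
proof (rule ccontr)
  assume "\<not> ?thesis"
  then have "c < (SUP a\<in>A. f a)" "c < (SUP b\<in>B. g b)" by auto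
  then obtain a b where "a \<in> A" "c < f a" "b \<in> B" "c < g b"
    using less_cSUP_iff[OF assms(1,3)] less_cSUP_iff[OF assms(2,4)] by blast
  with assms(5)[of a b] show False by auto
qed

lemma min_cSUP_le:
  fixes g :: "'a \<Rightarrow> real"
  assumes "B \<noteq> {}" "bdd_above (g ` B)" "\<And>b. b \<in> B \<Longrightarrow> min x (g b) \<le> c"
  shows "min x (SUP b\<in>B. g b) \<le> c"
  using min_cSUP_cSUP_le[of "{x}" B "\<lambda>x. x" g c] assms by simp

subsection \<open>Meet and join of fuzzy sets\<close>

lemma fmeet_commute: "fmeet f g = fmeet g f"
proof
  fix v
  have "{min (f u) (g w) |u w. u \<in> {0..1} \<and> w \<in> {0..1} \<and> min u w = v} =
        {min (g u) (f w) |u w. u \<in> {0..1} \<and> w \<in> {0..1} \<and> min u w = v}"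
    by (auto simp: min.commute) (metis min.commute)+
  then show "fmeet f g v = fmeet g f v" by (simp add: fmeet_def)
qed

lemma bdd_above_min_pairs:
  "fz_bounded f \<Longrightarrow> fz_bounded g \<Longrightarrow>
     bdd_above {min (f u) (g w) | u w. u \<in> {0..1} \<and> w \<in> {0..1} \<and> P u w}"
  unfolding fz_bounded_def by (intro bdd_aboveI[where M=1]) force

lemma fmeet_upper:
  assumes "fz_bounded f" "fz_bounded g" "u \<in> {0..1}" "w \<in> {0..1}"
  shows "min (f u) (g w) \<le> fmeet f g (min u w)"
  unfolding fmeet_def
  using assms bdd_above_min_pairs[OF assms(1,2), of "\<lambda>u' w'. min u' w' = min u w"]
  by (auto intro!: cSup_upper)

lemma fjoin_upper:
  assumes "fz_bounded f" "fz_bounded g" "u \<in> {0..1}" "w \<in> {0..1}"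
  shows "min (f u) (g w) \<le> fjoin f g (max u w)"
  unfolding fjoin_def
  using assms bdd_above_min_pairs[OF assms(1,2), of "\<lambda>u' w'. max u' w' = max u w"]
  by (auto intro!: cSup_upper)

lemma fmeet_least:
  assumes "v \<in> {0..1}"
    and "\<And>u w. u \<in> {0..1} \<Longrightarrow> w \<in> {0..1} \<Longrightarrow> min u w = v \<Longrightarrow> min (f u) (g w) \<le> c"
  shows "fmeet f g v \<le> c"
  unfolding fmeet_def using assms by (auto intro!: cSup_least) (metis min.idem)

lemma fjoin_least:
  assumes "v \<in> {0..1}"
    and "\<And>u w. u \<in> {0..1} \<Longrightarrow> w \<in> {0..1} \<Longrightarrow> max u w = v \<Longrightarrow> min (f u) (g w) \<le> c"
  shows "fjoin f g v \<le> c"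
  unfolding fjoin_def using assms by (auto intro!: cSup_least) (metis max.idem)

lemma fz_bounded_fmeet:
  assumes "fz_bounded f" "fz_bounded g"
  shows "fz_bounded (fmeet f g)"
  unfolding fz_bounded_def
proof (intro ballI conjI)
  fix v :: real
  assume v: "v \<in> {0..1}"
  have "0 \<le> min (f v) (g v)" using v assms by (auto simp: fz_bounded_def)
  also have "\<dots> \<le> fmeet f g v" using fmeet_upper[OF assms v v] by simp
  finally show "0 \<le> fmeet f g v" .
  show "fmeet f g v \<le> 1"
    using v assms by (intro fmeet_least) (auto simp: fz_bounded_def min_le_iff_disj)
qed

lemma fz_bounded_fjoin:
  assumes "fz_bounded f" "fz_bounded g"
  shows "fz_bounded (fjoin f g)"
  unfolding fz_bounded_def
proof (intro ballI conjI)
  fix v :: real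
  assume v: "v \<in> {0..1}"
  have "0 \<le> min (f v) (g v)" using v assms by (auto simp: fz_bounded_def)
  also have "\<dots> \<le> fjoin f g v" using fjoin_upper[OF assms v v] by simp
  finally show "0 \<le> fjoin f g v" .
  show "fjoin f g v \<le> 1"
    using v assms by (intro fjoin_least) (auto simp: fz_bounded_def min_le_iff_disj)
qed

lemma vanishes_outside_unit_fmeet: "vanishes_outside_unit (fmeet f g)"
  unfolding vanishes_outside_unit_def fmeet_def by auto

lemma vanishes_outside_unit_fjoin: "vanishes_outside_unit (fjoin f g)"
  unfolding vanishes_outside_unit_def fjoin_def by auto

subsection \<open>Envelopes of normal convex fuzzy sets\<close>

lemma ncfd_iff_envelopes:
  "ncfd f \<longleftrightarrow> fz_bounded f \<and> (\<exists>u\<in>{0..1}. f u = 1) \<and>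
     (\<forall>v\<in>{0..1}. f v = min (left_env f v) (right_env f v))" (is "_ \<longleftrightarrow> ?envelopes")
proof
  assume f: "ncfd f"
  then have bf: "fz_bounded f" by (simp add: ncfd_def fz_bounded_def)
  have "f v = min (left_env f v) (right_env f v)" if v: "v \<in> {0..1}" for v
  proof (rule antisym)
    show "f v \<le> min (left_env f v) (right_env f v)"
      using v left_env_upper[OF bf, of v v] right_env_upper[OF bf, of v v] by simp
    show "min (left_env f v) (right_env f v) \<le> f v"
      unfolding left_env_def right_env_def
      by (rule min_cSUP_cSUP_le) (use f v bf in \<open>auto simp: ncfd_def intro: fz_bounded_bdd_above\<close>)
  qed
  with f bf show ?envelopes by (auto simp: ncfd_def)
next
  assume ?envelopes
  then have bf: "fz_bounded f" and peak: "\<exists>u\<in>{0..1}. f u = 1"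
    and env: "\<And>v. v \<in> {0..1} \<Longrightarrow> f v = min (left_env f v) (right_env f v)" by auto
  have "min (f ui) (f uk) \<le> f uj"
    if "ui \<in> {0..1}" "uk \<in> {0..1}" "ui \<le> uj" "uj \<le> uk" for ui uj uk
    using left_env_upper[OF bf, of ui uj] right_env_upper[OF bf, of uj uk] env[of uj] that
    by (auto simp: min_le_iff_disj)
  with bf peak show "ncfd f" by (auto simp: ncfd_def fz_bounded_def)
qed

lemma ncfd_fz_bounded: "ncfd f \<Longrightarrow> fz_bounded f"
  by (simp add: ncfd_iff_envelopes)

lemma ncfd_peak: "ncfd f \<Longrightarrow> \<exists>p\<in>{0..1}. f p = 1"
  by (simp add: ncfd_def)

lemma ncfd_envelopes: "ncfd f \<Longrightarrow> 0 \<le> v \<Longrightarrow> v \<le> 1 \<Longrightarrow> f v = min (left_env f v) (right_env f v)"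
  by (simp add: ncfd_iff_envelopes)

lemma ncfd_eq_if_envelopes_eq:
  assumes "ncfd f" "ncfd g" "vanishes_outside_unit f" "vanishes_outside_unit g"
    and "\<And>v. 0 \<le> v \<Longrightarrow> v \<le> 1 \<Longrightarrow> left_env f v = left_env g v"
    and "\<And>v. 0 \<le> v \<Longrightarrow> v \<le> 1 \<Longrightarrow> right_env f v = right_env g v"
  shows "f = g"
proof
  fix v
  show "f v = g v"
    using assms ncfd_envelopes[OF assms(1), of v] ncfd_envelopes[OF assms(2), of v]
    by (cases "v \<in> {0..1}") (auto simp: vanishes_outside_unit_def)
qed

lemma left_env_fmeet:
  assumes f: "ncfd f" and g: "ncfd g" and v: "0 \<le> v" "v \<le> 1"
  shows "left_env (fmeet f g) v = max (left_env f v) (left_env g v)"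
proof (rule antisym)
  have bf: "fz_bounded f" and bg: "fz_bounded g" using f g by (auto simp: ncfd_fz_bounded)
  have bh: "fz_bounded (fmeet f g)" by (rule fz_bounded_fmeet[OF bf bg])
  show "left_env (fmeet f g) v \<le> max (left_env f v) (left_env g v)"
  proof (rule left_env_least[OF v(1)])
    fix x assume x: "0 \<le> x" "x \<le> v"
    show "fmeet f g x \<le> max (left_env f v) (left_env g v)"
    proof (rule fmeet_least)
      fix u w assume "u \<in> {0..1}" "w \<in> {0..1}" "min u w = x"
      moreover from this x have "u \<le> v \<or> w \<le> v" by (auto simp: min_def split: if_splits)
      ultimately show "min (f u) (g w) \<le> max (left_env f v) (left_env g v)"
        using v left_env_upper[OF bf, of u v] left_env_upper[OF bg, of w v]
        by (auto simp: min_le_iff_disj le_max_iff_disj)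
    qed (use x v in auto)
  qed
  obtain pf where pf: "pf \<in> {0..1}" "f pf = 1" using ncfd_peak[OF f] by blast
  obtain pg where pg: "pg \<in> {0..1}" "g pg = 1" using ncfd_peak[OF g] by blast
  have "left_env f v \<le> left_env (fmeet f g) v"
  proof (rule left_env_least[OF v(1)])
    fix x assume x: "0 \<le> x" "x \<le> v"
    have "min (f x) (g pg) \<le> fmeet f g (min x pg)" using x v pg by (intro fmeet_upper[OF bf bg]) auto
    also have "\<dots> \<le> left_env (fmeet f g) v" using x v pg by (intro left_env_upper[OF bh]) auto
    finally show "f x \<le> left_env (fmeet f g) v" using pg fz_boundedD[OF bf x(1)] x v by auto
  qed
  moreover have "left_env g v \<le> left_env (fmeet f g) v"
  proof (rule left_env_least[OF v(1)])
    fix x assume x: "0 \<le> x" "x \<le> v"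
    have "min (f pf) (g x) \<le> fmeet f g (min pf x)" using x v pf by (intro fmeet_upper[OF bf bg]) auto
    also have "\<dots> \<le> left_env (fmeet f g) v" using x v pf by (intro left_env_upper[OF bh]) auto
    finally show "g x \<le> left_env (fmeet f g) v" using pf fz_boundedD[OF bg x(1)] x v by auto
  qed
  ultimately show "max (left_env f v) (left_env g v) \<le> left_env (fmeet f g) v" by simp
qed

lemma right_env_fjoin:
  assumes f: "ncfd f" and g: "ncfd g" and v: "0 \<le> v" "v \<le> 1"
  shows "right_env (fjoin f g) v = max (right_env f v) (right_env g v)"
proof (rule antisym)
  have bf: "fz_bounded f" and bg: "fz_bounded g" using f g by (auto simp: ncfd_fz_bounded)
  have bh: "fz_bounded (fjoin f g)" by (rule fz_bounded_fjoin[OF bf bg])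
  show "right_env (fjoin f g) v \<le> max (right_env f v) (right_env g v)"
  proof (rule right_env_least[OF v(2)])
    fix x assume x: "v \<le> x" "x \<le> 1"
    show "fjoin f g x \<le> max (right_env f v) (right_env g v)"
    proof (rule fjoin_least)
      fix u w assume "u \<in> {0..1}" "w \<in> {0..1}" "max u w = x"
      moreover from this x have "v \<le> u \<or> v \<le> w" by (auto simp: max_def split: if_splits)
      ultimately show "min (f u) (g w) \<le> max (right_env f v) (right_env g v)"
        using v right_env_upper[OF bf, of v u] right_env_upper[OF bg, of v w]
        by (auto simp: min_le_iff_disj le_max_iff_disj)
    qed (use x v in auto)
  qed
  obtain pf where pf: "pf \<in> {0..1}" "f pf = 1" using ncfd_peak[OF f] by blast
  obtain pg where pg: "pg \<in> {0..1}" "g pg = 1" using ncfd_peak[OF g] by blast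
  have "right_env f v \<le> right_env (fjoin f g) v"
  proof (rule right_env_least[OF v(2)])
    fix x assume x: "v \<le> x" "x \<le> 1"
    have "min (f x) (g pg) \<le> fjoin f g (max x pg)" using x v pg by (intro fjoin_upper[OF bf bg]) auto
    also have "\<dots> \<le> right_env (fjoin f g) v" using x v pg by (intro right_env_upper[OF bh]) auto
    finally show "f x \<le> right_env (fjoin f g) v" using pg fz_boundedD[OF bf, of x] x v by auto
  qed
  moreover have "right_env g v \<le> right_env (fjoin f g) v"
  proof (rule right_env_least[OF v(2)])
    fix x assume x: "v \<le> x" "x \<le> 1"
    have "min (f pf) (g x) \<le> fjoin f g (max pf x)" using x v pf by (intro fjoin_upper[OF bf bg]) auto
    also have "\<dots> \<le> right_env (fjoin f g) v" using x v pf by (intro right_env_upper[OF bh]) auto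
    finally show "g x \<le> right_env (fjoin f g) v" using pf fz_boundedD[OF bg, of x] x v by auto
  qed
  ultimately show "max (right_env f v) (right_env g v) \<le> right_env (fjoin f g) v" by simp
qed

lemma right_env_fmeet:
  assumes bf: "fz_bounded f" and bg: "fz_bounded g" and v: "0 \<le> v" "v \<le> 1"
  shows "right_env (fmeet f g) v = min (right_env f v) (right_env g v)"
proof (rule antisym)
  show "right_env (fmeet f g) v \<le> min (right_env f v) (right_env g v)"
  proof (rule right_env_least[OF v(2)])
    fix x assume x: "v \<le> x" "x \<le> 1"
    show "fmeet f g x \<le> min (right_env f v) (right_env g v)"
    proof (rule fmeet_least)
      fix u w assume "u \<in> {0..1}" "w \<in> {0..1}" "min u w = x"
      then show "min (f u) (g w) \<le> min (right_env f v) (right_env g v)"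
        using x v right_env_upper[OF bf, of v u] right_env_upper[OF bg, of v w] by auto
    qed (use x v in auto)
  qed
  show "min (right_env f v) (right_env g v) \<le> right_env (fmeet f g) v"
    unfolding right_env_def[of f] right_env_def[of g]
  proof (rule min_cSUP_cSUP_le)
    fix a b assume ab: "a \<in> {v..1}" "b \<in> {v..1}"
    have "min (f a) (g b) \<le> fmeet f g (min a b)" using ab v by (intro fmeet_upper[OF bf bg]) auto
    also have "\<dots> \<le> right_env (fmeet f g) v"
      using ab v by (intro right_env_upper fz_bounded_fmeet[OF bf bg]) auto
    finally show "min (f a) (g b) \<le> right_env (fmeet f g) v" .
  qed (use v bf bg in \<open>auto intro: fz_bounded_bdd_above\<close>)
qed

lemma left_env_fjoin:
  assumes bf: "fz_bounded f" and bg: "fz_bounded g" and v: "0 \<le> v" "v \<le> 1"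
  shows "left_env (fjoin f g) v = min (left_env f v) (left_env g v)"
proof (rule antisym)
  show "left_env (fjoin f g) v \<le> min (left_env f v) (left_env g v)"
  proof (rule left_env_least[OF v(1)])
    fix x assume x: "0 \<le> x" "x \<le> v"
    show "fjoin f g x \<le> min (left_env f v) (left_env g v)"
    proof (rule fjoin_least)
      fix u w assume "u \<in> {0..1}" "w \<in> {0..1}" "max u w = x"
      then show "min (f u) (g w) \<le> min (left_env f v) (left_env g v)"
        using x v left_env_upper[OF bf, of u v] left_env_upper[OF bg, of w v] by auto
    qed (use x v in auto)
  qed
  show "min (left_env f v) (left_env g v) \<le> left_env (fjoin f g) v"
    unfolding left_env_def[of f] left_env_def[of g]
  proof (rule min_cSUP_cSUP_le)
    fix a b assume ab: "a \<in> {0..v}" "b \<in> {0..v}"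
    have "min (f a) (g b) \<le> fjoin f g (max a b)" using ab v by (intro fjoin_upper[OF bf bg]) auto
    also have "\<dots> \<le> left_env (fjoin f g) v"
      using ab v by (intro left_env_upper fz_bounded_fjoin[OF bf bg]) auto
    finally show "min (f a) (g b) \<le> left_env (fjoin f g) v" .
  qed (use v bf bg in \<open>auto intro: fz_bounded_bdd_above\<close>)
qed

lemma ncfd_fmeet:
  assumes f: "ncfd f" and g: "ncfd g"
  shows "ncfd (fmeet f g)"
  unfolding ncfd_iff_envelopes
proof (intro conjI ballI)
  have bf: "fz_bounded f" and bg: "fz_bounded g" using f g by (auto simp: ncfd_fz_bounded)
  show bh: "fz_bounded (fmeet f g)" by (rule fz_bounded_fmeet[OF bf bg])
  obtain pf where pf: "pf \<in> {0..1}" "f pf = 1" using ncfd_peak[OF f] by blast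
  obtain pg where pg: "pg \<in> {0..1}" "g pg = 1" using ncfd_peak[OF g] by blast
  have "1 \<le> fmeet f g (min pf pg)" using fmeet_upper[OF bf bg pf(1) pg(1)] pf pg by simp
  then show "\<exists>u\<in>{0..1}. fmeet f g u = 1"
    using fz_boundedD[OF bh, of "min pf pg"] pf pg by (intro bexI[of _ "min pf pg"]) auto
  fix v :: real
  assume "v \<in> {0..1}"
  then have v: "0 \<le> v" "v \<le> 1" by auto
  show "fmeet f g v = min (left_env (fmeet f g) v) (right_env (fmeet f g) v)"
  proof (rule antisym)
    show "fmeet f g v \<le> min (left_env (fmeet f g) v) (right_env (fmeet f g) v)"
      using left_env_upper[OF bh, of v v] right_env_upper[OF bh, of v v] v by simp
    have f_right_g: "min (f v) (right_env g v) \<le> fmeet f g v"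
      unfolding right_env_def
    proof (rule min_cSUP_le)
      fix w assume "w \<in> {v..1}"
      then show "min (f v) (g w) \<le> fmeet f g v" using fmeet_upper[OF bf bg, of v w] v by (auto simp: min.commute min_absorb1 max_absorb1)
    qed (use v bf bg in \<open>auto intro: fz_bounded_bdd_above\<close>)
    have g_right_f: "min (g v) (right_env f v) \<le> fmeet f g v"
      unfolding right_env_def
    proof (rule min_cSUP_le)
      fix w assume "w \<in> {v..1}"
      then show "min (g v) (f w) \<le> fmeet f g v" using fmeet_upper[OF bf bg, of w v] v by (auto simp: min.commute min_absorb1 max_absorb1)
    qed (use v bf bg in \<open>auto intro: fz_bounded_bdd_above\<close>)
    show "min (left_env (fmeet f g) v) (right_env (fmeet f g) v) \<le> fmeet f g v"
      unfolding left_env_fmeet[OF f g v] right_env_fmeet[OF bf bg v]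
      using f_right_g g_right_f ncfd_envelopes[OF f v] ncfd_envelopes[OF g v]
      by (auto simp: min_def max_def split: if_splits)
  qed
qed

lemma ncfd_fjoin:
  assumes f: "ncfd f" and g: "ncfd g"
  shows "ncfd (fjoin f g)"
  unfolding ncfd_iff_envelopes
proof (intro conjI ballI)
  have bf: "fz_bounded f" and bg: "fz_bounded g" using f g by (auto simp: ncfd_fz_bounded)
  show bh: "fz_bounded (fjoin f g)" by (rule fz_bounded_fjoin[OF bf bg])
  obtain pf where pf: "pf \<in> {0..1}" "f pf = 1" using ncfd_peak[OF f] by blast
  obtain pg where pg: "pg \<in> {0..1}" "g pg = 1" using ncfd_peak[OF g] by blast
  have "1 \<le> fjoin f g (max pf pg)" using fjoin_upper[OF bf bg pf(1) pg(1)] pf pg by simp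
  then show "\<exists>u\<in>{0..1}. fjoin f g u = 1"
    using fz_boundedD[OF bh, of "max pf pg"] pf pg by (intro bexI[of _ "max pf pg"]) auto
  fix v :: real
  assume "v \<in> {0..1}"
  then have v: "0 \<le> v" "v \<le> 1" by auto
  show "fjoin f g v = min (left_env (fjoin f g) v) (right_env (fjoin f g) v)"
  proof (rule antisym)
    show "fjoin f g v \<le> min (left_env (fjoin f g) v) (right_env (fjoin f g) v)"
      using left_env_upper[OF bh, of v v] right_env_upper[OF bh, of v v] v by simp
    have f_left_g: "min (f v) (left_env g v) \<le> fjoin f g v"
      unfolding left_env_def
    proof (rule min_cSUP_le)
      fix w assume "w \<in> {0..v}"
      then show "min (f v) (g w) \<le> fjoin f g v" using fjoin_upper[OF bf bg, of v w] v by (auto simp: min.commute max_absorb1 max_absorb2)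
    qed (use v bf bg in \<open>auto intro: fz_bounded_bdd_above\<close>)
    have g_left_f: "min (g v) (left_env f v) \<le> fjoin f g v"
      unfolding left_env_def
    proof (rule min_cSUP_le)
      fix w assume "w \<in> {0..v}"
      then show "min (g v) (f w) \<le> fjoin f g v" using fjoin_upper[OF bf bg, of w v] v by (auto simp: min.commute max_absorb1 max_absorb2)
    qed (use v bf bg in \<open>auto intro: fz_bounded_bdd_above\<close>)
    show "min (left_env (fjoin f g) v) (right_env (fjoin f g) v) \<le> fjoin f g v"
      unfolding left_env_fjoin[OF bf bg v] right_env_fjoin[OF f g v]
      using f_left_g g_left_f ncfd_envelopes[OF f v] ncfd_envelopes[OF g v]
      by (auto simp: min_def max_def split: if_splits)
  qed
qed

lemma left_env_le_1: "fz_bounded f \<Longrightarrow> 0 \<le> v \<Longrightarrow> v \<le> 1 \<Longrightarrow> left_env f v \<le> 1"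
  by (rule left_env_least) (auto dest: fz_boundedD)

lemma right_env_le_1: "fz_bounded f \<Longrightarrow> 0 \<le> v \<Longrightarrow> v \<le> 1 \<Longrightarrow> right_env f v \<le> 1"
  by (rule right_env_least) (auto simp: fz_bounded_def)

lemma right_env_nonneg: "fz_bounded f \<Longrightarrow> 0 \<le> v \<Longrightarrow> v \<le> 1 \<Longrightarrow> 0 \<le> right_env f v"
  using right_env_upper[of f v v] fz_boundedD[of f v] by auto

lemma ncfd_right_env_0: "ncfd f \<Longrightarrow> right_env f 0 = 1"
  using ncfd_peak[of f] right_env_upper[of f 0] right_env_le_1[of f 0]
  by (force simp: ncfd_fz_bounded)

lemma ncfd_singl: "u \<in> {0..1} \<Longrightarrow> ncfd (singl 1 u)"
  unfolding ncfd_def singl_def by auto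

lemma vanishes_outside_unit_singl: "u \<in> {0..1} \<Longrightarrow> vanishes_outside_unit (singl a u)"
  unfolding vanishes_outside_unit_def singl_def by auto

lemma left_env_singl_0: "0 \<le> v \<Longrightarrow> v \<le> 1 \<Longrightarrow> left_env (singl 1 0) v = 1"
  using left_env_upper[OF ncfd_fz_bounded[OF ncfd_singl], of 0 0 v]
    left_env_le_1[OF ncfd_fz_bounded[OF ncfd_singl], of 0 v]
  by (simp add: singl_def)

lemma right_env_singl_0:
  "0 \<le> v \<Longrightarrow> v \<le> 1 \<Longrightarrow> right_env (singl 1 0) v = (if v = 0 then 1 else 0)"
  using right_env_upper[OF ncfd_fz_bounded[OF ncfd_singl], of 0 v v]
    right_env_le_1[OF ncfd_fz_bounded[OF ncfd_singl], of 0 v]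
    right_env_least[of v "singl 1 0" 0]
  by (auto simp: singl_def)

subsection \<open>Lattice laws\<close>

lemma fmeet_interchange:
  "ncfd a \<Longrightarrow> ncfd b \<Longrightarrow> ncfd c \<Longrightarrow> ncfd d \<Longrightarrow>
     fmeet (fmeet a b) (fmeet c d) = fmeet (fmeet a c) (fmeet b d)"
  by (rule ncfd_eq_if_envelopes_eq)
    (auto simp: ncfd_fmeet vanishes_outside_unit_fmeet left_env_fmeet right_env_fmeet
      ncfd_fz_bounded max_def min_def)

lemma fjoin_assoc:
  "ncfd a \<Longrightarrow> ncfd b \<Longrightarrow> ncfd c \<Longrightarrow> fjoin (fjoin a b) c = fjoin a (fjoin b c)"
  by (rule ncfd_eq_if_envelopes_eq)
    (auto simp: ncfd_fjoin vanishes_outside_unit_fjoin left_env_fjoin right_env_fjoin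
      ncfd_fz_bounded max_def min_def)

lemma fmeet_fjoin_distrib:
  "ncfd a \<Longrightarrow> ncfd b \<Longrightarrow> ncfd c \<Longrightarrow> fmeet a (fjoin b c) = fjoin (fmeet a b) (fmeet a c)"
  by (rule ncfd_eq_if_envelopes_eq)
    (auto simp: ncfd_fjoin vanishes_outside_unit_fjoin left_env_fjoin right_env_fjoin
      ncfd_fmeet vanishes_outside_unit_fmeet left_env_fmeet right_env_fmeet
      ncfd_fz_bounded max_def min_def)

lemma fjoin_singl_0_left:
  assumes "ncfd h" "vanishes_outside_unit h"
  shows "fjoin (singl 1 0) h = h"
proof (rule ncfd_eq_if_envelopes_eq)
  fix v :: real
  assume v: "0 \<le> v" "v \<le> 1"
  have bh: "fz_bounded h" using assms(1) by (rule ncfd_fz_bounded)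
  show "left_env (fjoin (singl 1 0) h) v = left_env h v"
    using left_env_le_1[OF bh v] v
    by (simp add: left_env_fjoin ncfd_fz_bounded ncfd_singl left_env_singl_0 bh)
  show "right_env (fjoin (singl 1 0) h) v = right_env h v"
    using right_env_nonneg[OF bh v] ncfd_right_env_0[OF assms(1)] v
    by (simp add: right_env_fjoin ncfd_singl right_env_singl_0 assms(1))
qed (use assms in \<open>auto simp: ncfd_fjoin ncfd_singl vanishes_outside_unit_fjoin\<close>)

lemma fmeet_singl_0_right:
  assumes "ncfd h"
  shows "fmeet h (singl 1 0) = singl 1 0"
proof (rule ncfd_eq_if_envelopes_eq)
  fix v :: real
  assume v: "0 \<le> v" "v \<le> 1"
  have bh: "fz_bounded h" using assms by (rule ncfd_fz_bounded)
  show "left_env (fmeet h (singl 1 0)) v = left_env (singl 1 0) v"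
    using left_env_le_1[OF bh v] v
    by (simp add: left_env_fmeet ncfd_singl left_env_singl_0 assms)
  show "right_env (fmeet h (singl 1 0)) v = right_env (singl 1 0) v"
    using right_env_nonneg[OF bh v] ncfd_right_env_0[OF assms] v
    by (simp add: right_env_fmeet ncfd_fz_bounded ncfd_singl right_env_singl_0 bh)
qed (use assms in \<open>auto simp: ncfd_fmeet ncfd_singl vanishes_outside_unit_fmeet
       vanishes_outside_unit_singl\<close>)

lemma fmeet_singl_1_idem: "fmeet (singl 1 1) (singl 1 1) = singl 1 1"
  by (rule ncfd_eq_if_envelopes_eq)
    (auto simp: ncfd_fmeet ncfd_singl vanishes_outside_unit_fmeet vanishes_outside_unit_singl
      left_env_fmeet right_env_fmeet ncfd_fz_bounded)

subsection \<open>Finite joins\<close>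

lemma div_mod_less_mult: "(c::nat) < m * n \<Longrightarrow> c div n < m \<and> c mod n < n"
  by (cases "n = 0") (auto simp: less_mult_imp_div_less mult.commute)

lemma bigjoin_0 [simp]: "bigjoin 0 f = singl 1 0"
  by (simp add: bigjoin_def)

lemma bigjoin_Suc: "bigjoin (Suc n) f = fjoin (f 0) (bigjoin n (\<lambda>i. f (Suc i)))"
proof -
  have "[0..<Suc n] = 0 # map Suc [0..<n]"
    by (simp only: upt_conv_Cons[of 0 "Suc n"] zero_less_Suc map_Suc_upt)
  then show ?thesis by (simp add: bigjoin_def foldr_map o_def del: upt_Suc)
qed

lemma bigjoin_cong: "(\<And>i. i < n \<Longrightarrow> f i = g i) \<Longrightarrow> bigjoin n f = bigjoin n g"
  unfolding bigjoin_def by (rule foldr_cong) auto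

lemma ncfd_bigjoin: "(\<And>i. i < n \<Longrightarrow> ncfd (f i)) \<Longrightarrow> ncfd (bigjoin n f)"
proof (induction n arbitrary: f)
  case 0
  then show ?case by (simp add: ncfd_singl)
next
  case (Suc n)
  then show ?case by (simp add: bigjoin_Suc ncfd_fjoin)
qed

lemma vanishes_outside_unit_bigjoin: "vanishes_outside_unit (bigjoin n f)"
  by (cases n) (simp_all add: bigjoin_Suc vanishes_outside_unit_singl vanishes_outside_unit_fjoin)

lemma bigjoin_add:
  "(\<And>i. i < a + b \<Longrightarrow> ncfd (f i)) \<Longrightarrow>
     bigjoin (a + b) f = fjoin (bigjoin a f) (bigjoin b (\<lambda>i. f (a + i)))"
proof (induction a arbitrary: f)
  case 0
  then show ?case by (simp add: fjoin_singl_0_left ncfd_bigjoin vanishes_outside_unit_bigjoin)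
next
  case (Suc a)
  have "bigjoin (Suc a + b) f = fjoin (f 0) (bigjoin (a + b) (\<lambda>i. f (Suc i)))"
    by (simp add: bigjoin_Suc)
  also have "\<dots> = fjoin (f 0) (fjoin (bigjoin a (\<lambda>i. f (Suc i))) (bigjoin b (\<lambda>i. f (Suc (a + i)))))"
    using Suc.IH[of "\<lambda>i. f (Suc i)"] Suc.prems by simp
  also have "\<dots> = fjoin (fjoin (f 0) (bigjoin a (\<lambda>i. f (Suc i)))) (bigjoin b (\<lambda>i. f (Suc (a + i))))"
    using Suc.prems by (intro fjoin_assoc[symmetric] ncfd_bigjoin) auto
  finally show ?case by (simp add: bigjoin_Suc)
qed

lemma bigjoin_mult:
  "(\<And>i. i < m * n \<Longrightarrow> ncfd (f i)) \<Longrightarrow>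
     bigjoin (m * n) f = bigjoin m (\<lambda>a. bigjoin n (\<lambda>b. f (a * n + b)))"
proof (induction m arbitrary: f)
  case 0
  then show ?case by simp
next
  case (Suc m)
  have "bigjoin (Suc m * n) f = fjoin (bigjoin n f) (bigjoin (m * n) (\<lambda>i. f (n + i)))"
    using bigjoin_add[of n "m * n" f] Suc.prems by simp
  also have "\<dots> = fjoin (bigjoin n f) (bigjoin m (\<lambda>a. bigjoin n (\<lambda>b. f (n + (a * n + b)))))"
    using Suc.IH[of "\<lambda>i. f (n + i)"] Suc.prems by simp
  finally show ?case by (simp add: bigjoin_Suc algebra_simps)
qed

lemma fmeet_bigjoin_distrib:
  "ncfd x \<Longrightarrow> (\<And>i. i < n \<Longrightarrow> ncfd (q i)) \<Longrightarrow>
     fmeet x (bigjoin n q) = bigjoin n (\<lambda>i. fmeet x (q i))"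
proof (induction n arbitrary: q)
  case 0
  then show ?case by (simp add: fmeet_singl_0_right)
next
  case (Suc n)
  then show ?case
    by (simp add: bigjoin_Suc fmeet_fjoin_distrib ncfd_bigjoin)
qed

lemma fmeet_bigjoin_bigjoin:
  assumes "\<And>a. a < m \<Longrightarrow> ncfd (p a)" "\<And>b. b < n \<Longrightarrow> ncfd (q b)"
  shows "fmeet (bigjoin m p) (bigjoin n q) =
    bigjoin (m * n) (\<lambda>r. fmeet (p (r div n)) (q (r mod n)))"
proof -
  have "fmeet (bigjoin m p) (bigjoin n q) = bigjoin m (\<lambda>a. fmeet (p a) (bigjoin n q))"
    using assms by (subst (1 2) fmeet_commute) (intro fmeet_bigjoin_distrib ncfd_bigjoin; simp)
  also have "\<dots> = bigjoin m (\<lambda>a. bigjoin n (\<lambda>b. fmeet (p a) (q b)))"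
    using assms by (intro bigjoin_cong fmeet_bigjoin_distrib) auto
  also have "\<dots> = bigjoin (m * n) (\<lambda>r. fmeet (p (r div n)) (q (r mod n)))"
  proof (subst bigjoin_mult)
    fix i assume "i < m * n"
    then show "ncfd (fmeet (p (i div n)) (q (i mod n)))"
      using assms div_mod_less_mult[of i m n] by (intro ncfd_fmeet) auto
  qed (intro bigjoin_cong; simp)
  finally show ?thesis .
qed

subsection \<open>Composition with tensor matrices\<close>

lemma ncfd_mcomp_row:
  assumes "\<And>a. a < m \<Longrightarrow> ncfd (Y 0 a)" "\<And>a j. a < m \<Longrightarrow> j < m \<Longrightarrow> ncfd (A a j)" "j < m"
  shows "ncfd (mcomp m Y A 0 j)"
  unfolding mcomp_def using assms by (intro ncfd_bigjoin ncfd_fmeet) auto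

lemma mcomp_tensor_row:
  assumes X: "\<And>r. r < m * n \<Longrightarrow> X 0 r = fmeet (Y 0 (r div n)) (Z 0 (r mod n))"
    and Y: "\<And>a. a < m \<Longrightarrow> ncfd (Y 0 a)" and Z: "\<And>b. b < n \<Longrightarrow> ncfd (Z 0 b)"
    and A: "\<And>a j. a < m \<Longrightarrow> j < m \<Longrightarrow> ncfd (A a j)"
    and B: "\<And>b l. b < n \<Longrightarrow> l < n \<Longrightarrow> ncfd (B b l)"
    and c: "c < m * n"
  shows "mcomp (m * n) X (tensor n n A B) 0 c =
    fmeet (mcomp m Y A 0 (c div n)) (mcomp n Z B 0 (c mod n))"
proof -
  define j l where "j = c div n" and "l = c mod n"
  have jl: "j < m" "l < n" using div_mod_less_mult[OF c] by (auto simp: j_def l_def)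
  have "mcomp (m * n) X (tensor n n A B) 0 c =
      bigjoin (m * n) (\<lambda>r. fmeet (X 0 r) (fmeet (A (r div n) j) (B (r mod n) l)))"
    by (simp add: mcomp_def tensor_def j_def l_def)
  also have "\<dots> = bigjoin (m * n) (\<lambda>r.
      fmeet (fmeet (Y 0 (r div n)) (A (r div n) j)) (fmeet (Z 0 (r mod n)) (B (r mod n) l)))"
  proof (rule bigjoin_cong)
    fix r assume r: "r < m * n"
    then show "fmeet (X 0 r) (fmeet (A (r div n) j) (B (r mod n) l)) =
        fmeet (fmeet (Y 0 (r div n)) (A (r div n) j)) (fmeet (Z 0 (r mod n)) (B (r mod n) l))"
      unfolding X[OF r] using div_mod_less_mult[OF r] jl by (intro fmeet_interchange Y Z A B) auto
  qed
  also have "\<dots> = fmeet (bigjoin m (\<lambda>a. fmeet (Y 0 a) (A a j))) (bigjoin n (\<lambda>b. fmeet (Z 0 b) (B b l)))"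
    using jl by (intro fmeet_bigjoin_bigjoin[symmetric] ncfd_fmeet Y Z A B) auto
  finally show ?thesis by (simp add: mcomp_def j_def l_def)
qed

lemma ncfd_foldl_mcomp_row:
  assumes "\<And>\<sigma> i j. \<sigma> \<in> set s \<Longrightarrow> i < m \<Longrightarrow> j < m \<Longrightarrow> ncfd (M \<sigma> i j)"
    and "\<And>a. a < m \<Longrightarrow> ncfd (Y 0 a)" and "a < m"
  shows "ncfd (foldl (\<lambda>x \<sigma>. mcomp m x (M \<sigma>)) Y s 0 a)"
  using assms
proof (induction s arbitrary: a rule: rev_induct)
  case Nil
  then show ?case by simp
next
  case (snoc \<sigma> s)
  then show ?case by (simp add: ncfd_mcomp_row)
qed

lemma foldl_mcomp_tensor_row:
  assumes M1: "\<And>\<sigma> i j. \<sigma> \<in> set s \<Longrightarrow> i < m \<Longrightarrow> j < m \<Longrightarrow> ncfd (M1 \<sigma> i j)"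
    and M2: "\<And>\<sigma> i j. \<sigma> \<in> set s \<Longrightarrow> i < n \<Longrightarrow> j < n \<Longrightarrow> ncfd (M2 \<sigma> i j)"
    and Y: "\<And>a. a < m \<Longrightarrow> ncfd (Y 0 a)" and Z: "\<And>b. b < n \<Longrightarrow> ncfd (Z 0 b)"
    and X: "\<And>r. r < m * n \<Longrightarrow> X 0 r = fmeet (Y 0 (r div n)) (Z 0 (r mod n))"
    and c: "c < m * n"
  shows "foldl (\<lambda>x \<sigma>. mcomp (m * n) x (tensor n n (M1 \<sigma>) (M2 \<sigma>))) X s 0 c =
    fmeet (foldl (\<lambda>x \<sigma>. mcomp m x (M1 \<sigma>)) Y s 0 (c div n))
      (foldl (\<lambda>x \<sigma>. mcomp n x (M2 \<sigma>)) Z s 0 (c mod n))"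
  using M1 M2 c
proof (induction s arbitrary: c rule: rev_induct)
  case Nil
  then show ?case using X by simp
next
  case (snoc \<sigma> s)
  then show ?case
    by (simp, intro mcomp_tensor_row ncfd_foldl_mcomp_row[where M=M1] ncfd_foldl_mcomp_row[where M=M2])
      (auto intro: Y Z)
qed

lemma tensor_onescol: "tensor p q onescol onescol = onescol"
  by (simp add: tensor_def onescol_def fmeet_singl_1_idem)

lemma mcomp_foldl_tensor_onescol:
  assumes M1: "\<And>\<sigma> i j. \<sigma> \<in> set s \<Longrightarrow> i < m \<Longrightarrow> j < m \<Longrightarrow> ncfd (M1 \<sigma> i j)"
    and M2: "\<And>\<sigma> i j. \<sigma> \<in> set s \<Longrightarrow> i < n \<Longrightarrow> j < n \<Longrightarrow> ncfd (M2 \<sigma> i j)"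
    and Y: "\<And>a. a < m \<Longrightarrow> ncfd (Y 0 a)" and Z: "\<And>b. b < n \<Longrightarrow> ncfd (Z 0 b)"
    and "0 < m" "0 < n"
  shows "mcomp (m * n) (foldl (\<lambda>x \<sigma>. mcomp (m * n) x (tensor n n (M1 \<sigma>) (M2 \<sigma>))) (tensor 1 n Y Z) s)
      onescol 0 0 =
    fmeet (mcomp m (foldl (\<lambda>x \<sigma>. mcomp m x (M1 \<sigma>)) Y s) onescol 0 0)
      (mcomp n (foldl (\<lambda>x \<sigma>. mcomp n x (M2 \<sigma>)) Z s) onescol 0 0)"
proof -
  have "mcomp (m * n) (foldl (\<lambda>x \<sigma>. mcomp (m * n) x (tensor n n (M1 \<sigma>) (M2 \<sigma>))) (tensor 1 n Y Z) s)
      (tensor n n onescol onescol) 0 0 =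
    fmeet (mcomp m (foldl (\<lambda>x \<sigma>. mcomp m x (M1 \<sigma>)) Y s) onescol 0 (0 div n))
      (mcomp n (foldl (\<lambda>x \<sigma>. mcomp n x (M2 \<sigma>)) Z s) onescol 0 (0 mod n))"
    using assms
    by (intro mcomp_tensor_row foldl_mcomp_tensor_row ncfd_foldl_mcomp_row[where M=M1]
        ncfd_foldl_mcomp_row[where M=M2])
      (auto simp: tensor_def onescol_def ncfd_singl)
  then show ?thesis by (simp add: tensor_onescol)
qed

lemma is_bfa_ncfd_init: "is_bfa G \<Longrightarrow> a < nst G \<Longrightarrow> ncfd (init G 0 a)"
  by (simp add: is_bfa_def)

lemma is_bfa_ncfd_evm_or_unitm:
  "is_bfa G \<Longrightarrow> i < nst G \<Longrightarrow> j < nst G \<Longrightarrow>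
     ncfd ((if \<sigma> \<in> events G then evm G \<sigma> else unitm) i j)"
  by (simp add: is_bfa_def unitm_def ncfd_singl)

theorem proposition4:
  fixes G1 G2 :: "'e bfa" and s :: "'e list"
  assumes "is_bfa G1" and "is_bfa G2"
    and "s \<in> lists (events G1 \<union> events G2)"
  shows "lang (parcomp G1 G2) s = fmeet (lang_ext G1 s) (lang_ext G2 s)"
proof (cases "s = []")
  case True
  then show ?thesis by (simp add: lang_def lang_ext_def lang_with_def fmeet_singl_1_idem)
next
  case False
  let ?M = "\<lambda>G \<sigma>. if \<sigma> \<in> events G then evm G \<sigma> else unitm"
  let ?n = "nst G2"
  have "evm (parcomp G1 G2) \<sigma> = tensor ?n ?n (?M G1 \<sigma>) (?M G2 \<sigma>)" if "\<sigma> \<in> set s" for \<sigma>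
    using that assms(3) by (auto simp: parcomp_def Let_def)
  then have "lang (parcomp G1 G2) s =
      mcomp (nst G1 * ?n) (foldl (\<lambda>x \<sigma>. mcomp (nst G1 * ?n) x (tensor ?n ?n (?M G1 \<sigma>) (?M G2 \<sigma>)))
        (tensor 1 ?n (init G1) (init G2)) s) onescol 0 0"
    using False by (simp add: lang_def lang_with_def cong: foldl_cong) (simp add: parcomp_def Let_def)
  also have "\<dots> = fmeet (lang_ext G1 s) (lang_ext G2 s)"
    unfolding lang_ext_def lang_with_def if_not_P[OF False]
    by (rule mcomp_foldl_tensor_onescol)
      (use assms(1,2) in \<open>auto simp: is_bfa_ncfd_init is_bfa_ncfd_evm_or_unitm is_bfa_def\<close>)
  finally show ?thesis .
qed

end
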